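(* Let $R_1$ and $R_2$ be (not necessarily finite) commutative local rings with identity, let $I_1\neq R_1$ be an ideal of $R_1$ and $I_2\neq R_2$ an ideal of $R_2$, and put $R=R_1\times R_2$, $I=I_1\times I_2$. If there exist vertices $x,y$ of $\Gamma''_{I_1}(R_1)$ that are adjacent in $\Gamma''_{I_1}(R_1)$, or there exist vertices $x,y$ of $\Gamma''_{I_2}(R_2)$ that are adjacent in $\Gamma''_{I_2}(R_2)$, then $\Gamma''_I(R)$ is not planar.
   Context: $R_1\times R_2$ has componentwise operations. For a commutative ring $S$ and an ideal $J$ of $S$, $\Gamma''_J(S)$ is the simple undirected graph whose vertex set is $\{x\in S\setminus J : xS+J\neq S\}$, and two distinct vertices $x,y$ are adjacent if and only if $x\notin yS+J$ and $y\notin xS+J$. A graph is planar if it can be drawn in the plane with edges meeting only at their endpoints. *)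

theory Defs
  imports "HOL-Analysis.Analysis" "HOL-Algebra.Algebra"
begin

definition local_cring :: "('a, 'm) ring_scheme \<Rightarrow> bool" where
  "local_cring R \<longleftrightarrow> cring R \<and> (\<exists>!M. maximalideal M R)"

definition elt_plus_ideal :: "('a, 'm) ring_scheme \<Rightarrow> 'a \<Rightarrow> 'a set \<Rightarrow> 'a set" where
  "elt_plus_ideal S x J = {x \<otimes>\<^bsub>S\<^esub> s \<oplus>\<^bsub>S\<^esub> j | s j. s \<in> carrier S \<and> j \<in> J}"

definition gverts :: "('a, 'm) ring_scheme \<Rightarrow> 'a set \<Rightarrow> 'a set" where
  "gverts S J = {x \<in> carrier S - J. elt_plus_ideal S x J \<noteq> carrier S}"

definition gadj :: "('a, 'm) ring_scheme \<Rightarrow> 'a set \<Rightarrow> 'a \<Rightarrow> 'a \<Rightarrow> bool" where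
  "gadj S J x y \<longleftrightarrow> x \<in> gverts S J \<and> y \<in> gverts S J \<and> x \<noteq> y \<and>
     x \<notin> elt_plus_ideal S y J \<and> y \<notin> elt_plus_ideal S x J"

definition planar :: "'v set \<Rightarrow> ('v \<Rightarrow> 'v \<Rightarrow> bool) \<Rightarrow> bool" where
  "planar V E \<longleftrightarrow> (\<exists>(f :: 'v \<Rightarrow> complex) (\<gamma> :: 'v \<Rightarrow> 'v \<Rightarrow> real \<Rightarrow> complex).
     inj_on f V \<and>
     (\<forall>u v. E u v \<longrightarrow> arc (\<gamma> u v) \<and> pathstart (\<gamma> u v) = f u \<and> pathfinish (\<gamma> u v) = f v) \<and>
     (\<forall>u v w. E u v \<and> w \<in> V \<and> f w \<in> path_image (\<gamma> u v) \<longrightarrow> w = u \<or> w = v) \<and>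
     (\<forall>u v a b. E u v \<and> E a b \<and> {u, v} \<noteq> {a, b} \<longrightarrow>
        path_image (\<gamma> u v) \<inter> path_image (\<gamma> a b) \<subseteq> f ` ({u, v} \<inter> {a, b})))"

end

theory Submission
  imports Defs
begin

(* Only two distinct vertices x, y of one factor graph are needed, not their adjacency.
   In a local ring R1 every proper ideal lies in the maximal ideal M; so x R1 + I1, y R1 + I1
   and I1 lie in M while 1, 1 + x, 1 + y do not, and each of (x, 1), (y, 1), (0, 1) is adjacent
   to each of (1, 0), (1 + x, 0), (1 + y, 0): the graph of R1 x R2 contains K33.

   K33 is not planar by the Jordan curve theorem. In a drawing, the paths A0 - Bj - A1 form a
   theta graph. If the path through B2 enters the inside of the cycle through B0 and B1, that
   inside splits into two regions and A2 cannot reach all three Bj; otherwise an inversion in a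
   point inside the cycle exchanges inside and outside and reduces to the first case. *)

section \<open>Non-planarity of K33\<close>

lemma connected_subset_outside:
  fixes K :: "'a::real_normed_vector set"
  assumes "connected T" "T \<inter> K = {}" "z \<in> T" "z \<in> outside K"
  shows "T \<subseteq> outside K"
proof
  fix w assume "w \<in> T"
  then have "connected_component (- K) z w"
    unfolding connected_component_def using assms by blast
  then show "w \<in> outside K" using outside_same_component assms(4) by blast
qed

lemma connected_arc_image_Diff_pathfinish:
  fixes g :: "real \<Rightarrow> 'a::topological_space"
  assumes "arc g"
  shows "connected (path_image g - {pathfinish g})"
proof -
  have "{0..<1} = {0..1} - {1::real}"
    by auto
  then have "path_image g - {pathfinish g} = g ` {0..<1}"
    using assms inj_on_image_set_diff[of g "{0..1}" "{0..1}" "{1}"]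
    unfolding arc_def path_image_def pathfinish_def by auto
  moreover have "continuous_on {0..<1} g"
    using assms unfolding arc_def path_def by (auto elim: continuous_on_subset)
  ultimately show ?thesis
    by (metis connected_Ico connected_continuous_image)
qed

lemma inversion_connected_subset_outside:
  fixes K U :: "complex set"
  assumes "open U" "connected U" "U \<inter> (\<lambda>w. inverse (w - p)) ` K = {}"
    and "v \<in> U - {0}" "p + inverse v \<in> outside K"
  shows "(\<lambda>w. p + inverse w) ` (U - {0}) \<subseteq> outside K"
proof (rule connected_subset_outside)
  show "connected ((\<lambda>w. p + inverse w) ` (U - {0}))"
    using assms(1,2) by (intro connected_continuous_image connected_open_delete continuous_intros) auto
  have "w \<in> (\<lambda>w. inverse (w - p)) ` K" if "p + inverse w \<in> K" for w
    using imageI[OF that, of "\<lambda>w. inverse (w - p)"] by simp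
  then show "(\<lambda>w. p + inverse w) ` (U - {0}) \<inter> K = {}"
    using assms(3) by blast
qed (use assms(4,5) in auto)

lemma inversion_outside_into_inside:
  fixes K :: "complex set"
  assumes K: "compact K" and p: "p \<in> inside K" and z: "z \<in> outside K"
  shows "inverse (z - p) \<in> inside ((\<lambda>w. inverse (w - p)) ` K)"
proof -
  define h where "h w = inverse (w - p)" for w
  define U where "U = connected_component_set (- h ` K) (h z)"
  have "p \<notin> K" "z \<notin> K" "z \<noteq> p"
    using p z inside_no_overlap outside_no_overlap inside_Int_outside by blast+
  then have hz: "h z \<notin> h ` K" "h z \<in> U - {0}" "p + inverse (h z) = z"
    by (auto simp: h_def U_def)
  have "closed (h ` K)"
    unfolding h_def using \<open>p \<notin> K\<close>
    by (intro compact_imp_closed compact_continuous_image K continuous_intros) auto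
  then have "open U" "connected U" "U \<inter> h ` K = {}"
    unfolding U_def using connected_component_subset
    by (auto simp: open_connected_component open_Compl)
  then have outside: "(\<lambda>w. p + inverse w) ` (U - {0}) \<subseteq> outside K"
    using inversion_connected_subset_outside[of U p K "h z"] hz z by (simp add: h_def[abs_def])
  obtain e where "e > 0" "ball p e \<subseteq> inside K"
    using open_inside[OF compact_imp_closed[OF K]] p open_contains_ball by blast
  have "norm w \<le> 1 / e" if "w \<in> U" for w
  proof (rule ccontr)
    assume "\<not> norm w \<le> 1 / e"
    then have "w \<noteq> 0" "norm w > 1 / e"
      using \<open>e > 0\<close> by auto
    then have "dist p (p + inverse w) < e"
      using \<open>e > 0\<close> by (simp add: dist_norm norm_divide field_simps)
    then have "p + inverse w \<in> inside K"
      using \<open>ball p e \<subseteq> inside K\<close> by auto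
    moreover have "p + inverse w \<in> outside K"
      using outside \<open>w \<in> U\<close> \<open>w \<noteq> 0\<close> by blast
    ultimately show False
      using inside_Int_outside[of K] by blast
  qed
  then have "bounded U"
    unfolding bounded_iff by blast
  then show ?thesis
    using hz unfolding inside_def U_def h_def by simp
qed

locale K33_drawing =
  fixes A B :: "nat \<Rightarrow> complex" and g :: "nat \<Rightarrow> nat \<Rightarrow> real \<Rightarrow> complex"
  assumes arc_g: "\<And>i j. i < 3 \<Longrightarrow> j < 3 \<Longrightarrow> arc (g i j)"
    and pathstart_g: "\<And>i j. i < 3 \<Longrightarrow> j < 3 \<Longrightarrow> pathstart (g i j) = A i"
    and pathfinish_g: "\<And>i j. i < 3 \<Longrightarrow> j < 3 \<Longrightarrow> pathfinish (g i j) = B j"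
    and path_image_g_Int: "\<And>i j k l. \<lbrakk>i < 3; j < 3; k < 3; l < 3; (i, j) \<noteq> (k, l)\<rbrakk> \<Longrightarrow>
      path_image (g i j) \<inter> path_image (g k l)
        \<subseteq> (if i = k then {A i} else {}) \<union> (if j = l then {B j} else {})"
    and inj_A: "inj_on A {..<3}"
    and A_neq_B: "\<And>i j. i < 3 \<Longrightarrow> j < 3 \<Longrightarrow> A i \<noteq> B j"
begin

lemma A_in_path_image: "i < 3 \<Longrightarrow> j < 3 \<Longrightarrow> A i \<in> path_image (g i j)"
  using pathstart_in_path_image pathstart_g by metis

lemma B_in_path_image: "i < 3 \<Longrightarrow> j < 3 \<Longrightarrow> B j \<in> path_image (g i j)"
  using pathfinish_in_path_image pathfinish_g by metis

lemma connected_path_image_g: "i < 3 \<Longrightarrow> j < 3 \<Longrightarrow> connected (path_image (g i j))"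
  by (simp add: arc_g connected_arc_image)

lemma path_image_g_disjoint:
  "\<lbrakk>i < 3; j < 3; k < 3; l < 3; i \<noteq> k; j \<noteq> l\<rbrakk> \<Longrightarrow> path_image (g i j) \<inter> path_image (g k l) = {}"
  using path_image_g_Int[of i j k l] by auto

lemma A_notin_path_image: "\<lbrakk>i < 3; j < 3; k < 3; i \<noteq> k\<rbrakk> \<Longrightarrow> A i \<notin> path_image (g k j)"
  using path_image_g_Int[of i j k j] A_in_path_image[of i j] A_neq_B[of i j] by auto

lemma B_notin_path_image: "\<lbrakk>i < 3; j < 3; l < 3; j \<noteq> l\<rbrakk> \<Longrightarrow> B j \<notin> path_image (g i l)"
  using path_image_g_Int[of i j i l] B_in_path_image[of i j] A_neq_B[of i j] by auto

definition theta :: "nat \<Rightarrow> real \<Rightarrow> complex" where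
  "theta j = g 0 j +++ reversepath (g 1 j)"

abbreviation theta_cycle :: "nat \<Rightarrow> nat \<Rightarrow> complex set" where
  "theta_cycle j k \<equiv> path_image (theta j) \<union> path_image (theta k)"

lemma
  assumes "j < 3"
  shows pathstart_theta: "pathstart (theta j) = A 0"
    and pathfinish_theta: "pathfinish (theta j) = A 1"
    and path_image_theta: "path_image (theta j) = path_image (g 0 j) \<union> path_image (g 1 j)"
  using assms
  by (simp_all add: theta_def pathstart_g pathfinish_g path_image_join path_image_reversepath)

lemma arc_theta: "j < 3 \<Longrightarrow> arc (theta j)"
  using path_image_g_Int[of 0 j 1 j] unfolding theta_def
  by (intro arc_join arc_reversepath arc_g) (auto simp: pathstart_g pathfinish_g path_image_reversepath)

lemma path_image_theta_Int:
  assumes "j < 3" "k < 3" "j \<noteq> k"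
  shows "path_image (theta j) \<inter> path_image (theta k) = {A 0, A 1}"
proof
  show "path_image (theta j) \<inter> path_image (theta k) \<subseteq> {A 0, A 1}"
    using path_image_g_Int[of 0 j 0 k] path_image_g_Int[of 1 j 1 k] assms
      path_image_g_disjoint[of 0 j 1 k] path_image_g_disjoint[of 1 j 0 k]
    by (auto simp: path_image_theta)
  show "{A 0, A 1} \<subseteq> path_image (theta j) \<inter> path_image (theta k)"
    using A_in_path_image assms by (simp add: path_image_theta)
qed

lemma A2_notin_theta: "j < 3 \<Longrightarrow> A 2 \<notin> path_image (theta j)"
  using A_notin_path_image[of 2 j 0] A_notin_path_image[of 2 j 1] by (simp add: path_image_theta)

lemma inside_theta_cycle_nonempty: "inside (theta_cycle 0 1) \<noteq> {}"
proof -
  have "simple_path (theta 0 +++ reversepath (theta 1))"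
    using arc_theta path_image_theta_Int[of 0 1]
    by (subst simple_path_join_loop_eq)
      (auto simp: pathstart_theta pathfinish_theta path_image_reversepath arc_reversepath)
  then show ?thesis
    using Jordan_inside_outside[of "theta 0 +++ reversepath (theta 1)"]
    by (simp add: pathstart_theta pathfinish_theta path_image_join path_image_reversepath)
qed

lemma path_image_g2_Int_theta:
  assumes "j < 3" "k < 3"
  shows "path_image (g 2 j) \<inter> path_image (theta k) \<subseteq> (if j = k then {B j} else {})"
  using path_image_g_Int[of 2 j 0 k] path_image_g_Int[of 2 j 1 k] assms
  by (auto simp: path_image_theta)

lemma path_image_g2_disjoint_theta:
  "\<lbrakk>j < 3; k < 3; j \<noteq> k\<rbrakk> \<Longrightarrow> path_image (g 2 j) \<inter> path_image (theta k) = {}"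
  using path_image_g2_Int_theta by fastforce

lemma connected_component_A2_B:
  assumes "j < 3" "k < 3" "m < 3" "m \<noteq> j" "m \<noteq> k"
  shows "connected_component (- theta_cycle j k) (A 2) (B m)"
proof -
  have "path_image (g 2 m) \<subseteq> - theta_cycle j k"
    using path_image_g2_disjoint_theta[of m j] path_image_g2_disjoint_theta[of m k] assms by auto
  then show ?thesis
    unfolding connected_component_def
    using connected_path_image_g[of 2 m] A_in_path_image[of 2 m] B_in_path_image[of 2 m] assms(3)
    by (intro exI[of _ "path_image (g 2 m)"]) simp
qed

lemma theta_2_Int_inside_theta_cycle: "path_image (theta 2) \<inter> inside (theta_cycle 0 1) = {}"
proof (rule ccontr)
  assume meets: "path_image (theta 2) \<inter> inside (theta_cycle 0 1) \<noteq> {}"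
  have "A 0 \<noteq> A 1"
    using inj_onD[OF inj_A, of 0 1] by auto
  have split: "inside (theta_cycle 0 2) \<union> inside (theta_cycle 1 2) \<union>
      (path_image (theta 2) - {A 0, A 1}) = inside (theta_cycle 0 1)"
    by (rule split_inside_simple_closed_curve[of "theta 0" "A 0" "A 1" "theta 1" "theta 2"])
      (use meets \<open>A 0 \<noteq> A 1\<close> in \<open>simp_all add: arc_imp_simple_path arc_theta pathstart_theta
         pathfinish_theta path_image_theta_Int\<close>)
  then have inside_sub: "inside (theta_cycle 0 2) \<subseteq> inside (theta_cycle 0 1)"
      "inside (theta_cycle 1 2) \<subseteq> inside (theta_cycle 0 1)"
      "path_image (theta 2) - {A 0, A 1} \<subseteq> inside (theta_cycle 0 1)"
    by (simp_all only: split[symmetric]) blast+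
  have "A 2 \<notin> theta_cycle 0 1"
    using A2_notin_theta[of 0] A2_notin_theta[of 1] by simp
  then consider "A 2 \<in> inside (theta_cycle 0 1)" | "A 2 \<in> outside (theta_cycle 0 1)"
    unfolding outside_inside by blast
  then show False
  proof cases
    case 1
    have trapped: False if "A 2 \<in> inside (theta_cycle j 2)" "j < 2" "m < 2" "m \<noteq> j" for j m
    proof -
      have "B m \<in> inside (theta_cycle j 2)"
        using inside_same_component[OF connected_component_A2_B that(1)] that by simp
      then have "B m \<in> inside (theta_cycle 0 1)"
        using inside_sub less_2_cases[OF \<open>j < 2\<close>] by auto
      moreover have "B m \<in> theta_cycle 0 1"
        using B_in_path_image[of 0 m] less_2_cases[OF \<open>m < 2\<close>] by (auto simp: path_image_theta)
      ultimately show False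
        using inside_no_overlap by blast
    qed
    from 1 have "A 2 \<in> inside (theta_cycle 0 2) \<union> inside (theta_cycle 1 2) \<union>
        (path_image (theta 2) - {A 0, A 1})"
      unfolding split .
    then show False
      using A2_notin_theta[of 2] trapped[of 0 1] trapped[of 1 0] by auto
  next
    case 2
    have "B 2 \<in> outside (theta_cycle 0 1)"
      using outside_same_component[OF connected_component_A2_B 2] by simp
    moreover have "B 2 \<in> path_image (theta 2) - {A 0, A 1}"
      using B_in_path_image[of 0 2] A_neq_B[of 0 2] A_neq_B[of 1 2] by (auto simp: path_image_theta)
    ultimately show False
      using inside_sub(3) inside_Int_outside[of "theta_cycle 0 1"] by blast
  qed
qed

lemma B2_outside_theta_cycle: "B 2 \<in> outside (theta_cycle 0 1)"
proof -
  have "B 2 \<notin> theta_cycle 0 1"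
    using B_notin_path_image[of 0 2 0] B_notin_path_image[of 1 2 0]
      B_notin_path_image[of 0 2 1] B_notin_path_image[of 1 2 1]
    by (simp add: path_image_theta)
  moreover have "B 2 \<notin> inside (theta_cycle 0 1)"
    using theta_2_Int_inside_theta_cycle B_in_path_image[of 0 2] by (auto simp: path_image_theta)
  ultimately show ?thesis
    unfolding outside_inside by blast
qed

lemma A2_outside_theta_cycle: "A 2 \<in> outside (theta_cycle 0 1)"
proof -
  have "connected_component (- theta_cycle 0 1) (B 2) (A 2)"
    using connected_component_A2_B[of 0 1 2] connected_component_sym by simp
  then show ?thesis
    using outside_same_component B2_outside_theta_cycle by blast
qed

lemma path_image_g01_Int_inside_theta_cycle:
  assumes "i < 2" "j < 3"
  shows "path_image (g i j) \<inter> inside (theta_cycle 0 1) = {}"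
proof -
  have "i = 0 \<or> i = 1" "j = 0 \<or> j = 1 \<or> j = 2"
    using assms by auto
  then have "path_image (g i j) \<subseteq> theta_cycle 0 1 \<union> path_image (theta 2)"
    by (elim disjE) (auto simp: path_image_theta)
  then show ?thesis
    using theta_2_Int_inside_theta_cycle inside_no_overlap[of "theta_cycle 0 1"] by blast
qed

lemma path_image_g_Int_inside_theta_cycle:
  assumes "i < 3" "j < 3"
  shows "path_image (g i j) \<inter> inside (theta_cycle 0 1) = {}"
proof (cases "i = 2")
  case False
  then show ?thesis
    using assms path_image_g01_Int_inside_theta_cycle by simp
next
  case True
  have "path_image (g 2 j) \<inter> theta_cycle 0 1 \<subseteq> {B j}"
    using path_image_g2_Int_theta[of j 0] path_image_g2_Int_theta[of j 1] assms
    by (auto split: if_splits)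
  then have "(path_image (g 2 j) - {B j}) \<inter> theta_cycle 0 1 = {}"
    by blast
  moreover have "connected (path_image (g 2 j) - {B j})"
    using connected_arc_image_Diff_pathfinish[of "g 2 j"] arc_g pathfinish_g assms by simp
  moreover have "A 2 \<in> path_image (g 2 j) - {B j}"
    using A_in_path_image[of 2 j] A_neq_B[of 2 j] assms by simp
  ultimately have "path_image (g 2 j) - {B j} \<subseteq> outside (theta_cycle 0 1)"
    using connected_subset_outside A2_outside_theta_cycle by blast
  moreover have "B j \<notin> inside (theta_cycle 0 1)"
    using B_in_path_image[of 0 j] path_image_g01_Int_inside_theta_cycle[of 0 j] assms by auto
  ultimately show ?thesis
    using True inside_Int_outside[of "theta_cycle 0 1"] by blast
qed

lemma K33_drawing_image:
  assumes "inj h" and "\<And>i j. i < 3 \<Longrightarrow> j < 3 \<Longrightarrow> continuous_on (path_image (g i j)) h"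
  shows "K33_drawing (h \<circ> A) (h \<circ> B) (\<lambda>i j. h \<circ> g i j)"
proof
  fix i j :: nat
  assume ij: "i < 3" "j < 3"
  show "arc (h \<circ> g i j)"
    using arc_g[OF ij] assms(2)[OF ij] inj_on_subset[OF assms(1)]
    by (auto simp: arc_def intro: path_continuous_image comp_inj_on)
  show "pathstart (h \<circ> g i j) = (h \<circ> A) i" "pathfinish (h \<circ> g i j) = (h \<circ> B) j"
    using ij by (simp_all add: pathstart_compose pathfinish_compose pathstart_g pathfinish_g)
  show "(h \<circ> A) i \<noteq> (h \<circ> B) j"
    using A_neq_B[OF ij] assms(1) by (auto dest: injD)
next
  fix i j k l :: nat
  assume "i < 3" "j < 3" "k < 3" "l < 3" "(i, j) \<noteq> (k, l)"
  have "path_image (h \<circ> g i j) \<inter> path_image (h \<circ> g k l)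
      = h ` (path_image (g i j) \<inter> path_image (g k l))"
    by (simp add: path_image_compose image_Int[OF assms(1)])
  also have "\<dots> \<subseteq> h ` ((if i = k then {A i} else {}) \<union> (if j = l then {B j} else {}))"
    by (intro image_mono path_image_g_Int) fact+
  also have "\<dots> = (if i = k then {(h \<circ> A) i} else {}) \<union> (if j = l then {(h \<circ> B) j} else {})"
    by auto
  finally show "path_image (h \<circ> g i j) \<inter> path_image (h \<circ> g k l)
      \<subseteq> (if i = k then {(h \<circ> A) i} else {}) \<union> (if j = l then {(h \<circ> B) j} else {})" .
next
  show "inj_on (h \<circ> A) {..<3}"
    using inj_A inj_on_subset[OF assms(1)] by (blast intro: comp_inj_on)
qed

end

lemma no_K33_drawing: "\<not> K33_drawing A B g"
proof
  assume "K33_drawing A B g"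
  then interpret K33_drawing A B g .
  obtain p where p: "p \<in> inside (theta_cycle 0 1)"
    using inside_theta_cycle_nonempty by blast
  define h where "h = (\<lambda>w. inverse (w - p))"
  have "p \<notin> path_image (g i j)" if "i < 3" "j < 3" for i j
    using path_image_g_Int_inside_theta_cycle[OF that] p by blast
  then interpret image: K33_drawing "h \<circ> A" "h \<circ> B" "\<lambda>i j. h \<circ> g i j"
    by (intro K33_drawing_image) (auto simp: h_def inj_def intro!: continuous_intros)
  have "compact (theta_cycle 0 1)"
    using arc_theta by (simp add: compact_Un compact_path_image arc_imp_path)
  then have "h (B 2) \<in> inside (h ` theta_cycle 0 1)"
    unfolding h_def using p B2_outside_theta_cycle by (rule inversion_outside_into_inside)
  also have "h ` theta_cycle 0 1 = image.theta_cycle 0 1"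
    by (simp add: path_image_theta image.path_image_theta path_image_compose image_Un)
  finally have "h (B 2) \<in> inside (image.theta_cycle 0 1)" .
  moreover have "h (B 2) \<in> path_image (image.theta 2)"
    using B_in_path_image[of 0 2] by (simp add: image.path_image_theta path_image_compose)
  ultimately show False
    using image.theta_2_Int_inside_theta_cycle by blast
qed

lemma K33_not_planar:
  fixes V :: "'v set" and a b :: "nat \<Rightarrow> 'v"
  assumes "inj_on a {..<3}" "inj_on b {..<3}" "a ` {..<3} \<subseteq> V" "b ` {..<3} \<subseteq> V"
    and "a ` {..<3} \<inter> b ` {..<3} = {}" and E: "\<And>i j. i < 3 \<Longrightarrow> j < 3 \<Longrightarrow> E (a i) (b j)"
  shows "\<not> planar V E"
proof
  assume "planar V E"
  then obtain f :: "'v \<Rightarrow> complex" and \<gamma> :: "'v \<Rightarrow> 'v \<Rightarrow> real \<Rightarrow> complex" where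
      inj_f: "inj_on f V"
    and arc: "\<forall>u v. E u v \<longrightarrow> arc (\<gamma> u v) \<and> pathstart (\<gamma> u v) = f u \<and> pathfinish (\<gamma> u v) = f v"
    and meet: "\<forall>u v u' v'. E u v \<and> E u' v' \<and> {u, v} \<noteq> {u', v'} \<longrightarrow>
        path_image (\<gamma> u v) \<inter> path_image (\<gamma> u' v') \<subseteq> f ` ({u, v} \<inter> {u', v'})"
    unfolding planar_def by (elim exE conjE) (rule that, assumption+)
  have ab: "a i \<in> V" "b j \<in> V" "a i \<noteq> b j" if "i < 3" "j < 3" for i j
    using assms(3-5) that by blast+
  have inj_ab: "a i = a k \<longleftrightarrow> i = k" "b j = b l \<longleftrightarrow> j = l"
    if "i < 3" "j < 3" "k < 3" "l < 3" for i j k l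
    using that assms(1,2) by (auto dest: inj_onD)
  have "K33_drawing (f \<circ> a) (f \<circ> b) (\<lambda>i j. \<gamma> (a i) (b j))"
  proof
    fix i j :: nat
    assume "i < 3" "j < 3"
    then show "arc (\<gamma> (a i) (b j))" "pathstart (\<gamma> (a i) (b j)) = (f \<circ> a) i"
      "pathfinish (\<gamma> (a i) (b j)) = (f \<circ> b) j"
      using arc E by simp_all
    show "(f \<circ> a) i \<noteq> (f \<circ> b) j"
      using inj_on_contraD[OF inj_f] ab \<open>i < 3\<close> \<open>j < 3\<close> by simp
  next
    fix i j k l :: nat
    assume ijkl: "i < 3" "j < 3" "k < 3" "l < 3" "(i, j) \<noteq> (k, l)"
    then have "{a i, b j} \<inter> {a k, b l} = (if i = k then {a i} else {}) \<union> (if j = l then {b j} else {})"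
      and "{a i, b j} \<noteq> {a k, b l}"
      using ab[of i l] ab[of k j] inj_ab[of i j k l] by (auto simp: doubleton_eq_iff)
    moreover have "E (a i) (b j)" "E (a k) (b l)"
      using E ijkl by simp_all
    ultimately have "path_image (\<gamma> (a i) (b j)) \<inter> path_image (\<gamma> (a k) (b l))
        \<subseteq> f ` ((if i = k then {a i} else {}) \<union> (if j = l then {b j} else {}))"
      using meet by metis
    then show "path_image (\<gamma> (a i) (b j)) \<inter> path_image (\<gamma> (a k) (b l))
        \<subseteq> (if i = k then {(f \<circ> a) i} else {}) \<union> (if j = l then {(f \<circ> b) j} else {})"
      by auto
  next
    show "inj_on (f \<circ> a) {..<3}"
      using assms(1,3) by (intro comp_inj_on) (auto intro: inj_on_subset[OF inj_f])
  qed
  then show False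
    using no_K33_drawing by blast
qed

definition has_K33_subgraph :: "'v set \<Rightarrow> ('v \<Rightarrow> 'v \<Rightarrow> bool) \<Rightarrow> bool" where
  "has_K33_subgraph V E \<longleftrightarrow> (\<exists>S T. S \<subseteq> V \<and> T \<subseteq> V \<and> card S = 3 \<and> card T = 3 \<and> S \<inter> T = {} \<and>
     (\<forall>x\<in>S. \<forall>y\<in>T. E x y))"

lemma has_K33_subgraph_not_planar:
  assumes "has_K33_subgraph V E"
  shows "\<not> planar V E"
proof -
  obtain S T where "S \<subseteq> V" "T \<subseteq> V" "card S = 3" "card T = 3" "S \<inter> T = {}"
    and E: "\<forall>x\<in>S. \<forall>y\<in>T. E x y"
    using assms unfolding has_K33_subgraph_def by blast
  moreover obtain a b where "bij_betw a {0..<3::nat} S" "bij_betw b {0..<3::nat} T"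
    using ex_bij_betw_nat_finite card.infinite \<open>card S = 3\<close> \<open>card T = 3\<close>
    by (metis zero_neq_numeral)
  then have "bij_betw a {..<3} S" "bij_betw b {..<3} T"
    by (simp_all add: atLeast0LessThan)
  ultimately show ?thesis
    by (intro K33_not_planar[of a b]) (auto simp: bij_betw_def)
qed

lemma has_K33_subgraph_inj_hom:
  assumes "has_K33_subgraph V E" "inj_on h V" "h ` V \<subseteq> V'" "\<And>u v. E u v \<Longrightarrow> E' (h u) (h v)"
  shows "has_K33_subgraph V' E'"
proof -
  obtain S T where "S \<subseteq> V" "T \<subseteq> V" "card S = 3" "card T = 3" "S \<inter> T = {}"
    and E: "\<forall>x\<in>S. \<forall>y\<in>T. E x y"
    using assms(1) unfolding has_K33_subgraph_def by blast
  have "h ` S \<subseteq> V'" "h ` T \<subseteq> V'"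
    using assms(3) \<open>S \<subseteq> V\<close> \<open>T \<subseteq> V\<close> by auto
  moreover have "card (h ` S) = 3" "card (h ` T) = 3" "h ` S \<inter> h ` T = {}"
    using assms(2) \<open>S \<subseteq> V\<close> \<open>T \<subseteq> V\<close> \<open>S \<inter> T = {}\<close> \<open>card S = 3\<close> \<open>card T = 3\<close>
    by (auto simp: card_image inj_on_subset dest: inj_onD)
  moreover have "\<forall>x\<in>h ` S. \<forall>y\<in>h ` T. E' x y"
    using E assms(4) by blast
  ultimately show ?thesis
    unfolding has_K33_subgraph_def by blast
qed

section \<open>Ideals of a local ring\<close>

lemma (in cring) exists_maximalideal_superset:
  assumes "ideal I R" "I \<noteq> carrier R"
  obtains M where "maximalideal M R" "I \<subseteq> M"
proof -
  define \<I> where "\<I> = {J. ideal J R \<and> I \<subseteq> J \<and> \<one> \<notin> J}"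
  have "I \<in> \<I>"
    using assms ideal.one_imp_carrier unfolding \<I>_def by blast
  moreover have "\<Union>\<C> \<in> \<I>" if "\<C> \<noteq> {}" "subset.chain \<I> \<C>" for \<C>
  proof -
    have "subset.chain {J. ideal J R} \<C>"
      using that(2) unfolding pred_on.chain_def \<I>_def by blast
    from chain_Union_is_ideal[OF this] have "ideal (\<Union>\<C>) R"
      using that(1) by simp
    then show ?thesis
      using that unfolding pred_on.chain_def \<I>_def by blast
  qed
  ultimately obtain M where M: "M \<in> \<I>" and M_max: "\<And>J. J \<in> \<I> \<Longrightarrow> M \<subseteq> J \<Longrightarrow> J = M"
    using subset_Zorn_nonempty[of \<I>] by blast
  have "maximalideal M R"
  proof (rule maximalidealI)
    show "ideal M R" "carrier R \<noteq> M"
      using M unfolding \<I>_def by auto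
    show "J = M \<or> J = carrier R" if "ideal J R" "M \<subseteq> J" "J \<subseteq> carrier R" for J
      using that M M_max[of J] ideal.one_imp_carrier unfolding \<I>_def by blast
  qed
  then show thesis
    using that M unfolding \<I>_def by blast
qed

lemma local_cring_proper_ideal_subset:
  assumes "local_cring R"
  obtains M where "maximalideal M R" "\<And>J. ideal J R \<Longrightarrow> J \<noteq> carrier R \<Longrightarrow> J \<subseteq> M"
proof -
  interpret cring R
    using assms unfolding local_cring_def by blast
  obtain M where M: "maximalideal M R" and unique: "\<And>N. maximalideal N R \<Longrightarrow> N = M"
    using assms unfolding local_cring_def by blast
  show thesis
  proof (rule that[OF M])
    fix J assume "ideal J R" "J \<noteq> carrier R"
    then show "J \<subseteq> M"
      using exists_maximalideal_superset unique by metis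
  qed
qed

lemma (in ideal) one_add_notin:
  assumes "I \<noteq> carrier R" "x \<in> I"
  shows "\<one> \<oplus> x \<notin> I"
proof
  assume "\<one> \<oplus> x \<in> I"
  then have "(\<one> \<oplus> x) \<oplus> \<ominus> x \<in> I"
    using assms(2) a_closed a_inv_closed by blast
  moreover have "(\<one> \<oplus> x) \<oplus> \<ominus> x = \<one>"
    using Icarr[OF assms(2)] by (simp add: a_assoc r_neg)
  ultimately show False
    using assms(1) one_imp_carrier by simp
qed

context ring
begin

lemma elt_plus_ideal_self:
  assumes "x \<in> carrier R" "ideal J R"
  shows "x \<in> elt_plus_ideal R x J"
  using assms additive_subgroup.zero_closed[OF ideal.axioms(1)]
  unfolding elt_plus_ideal_def by (force intro: exI[of _ \<one>])

lemma ideal_subset_elt_plus_ideal: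
  assumes "x \<in> carrier R" "ideal J R"
  shows "J \<subseteq> elt_plus_ideal R x J"
  using assms ideal.Icarr unfolding elt_plus_ideal_def by (force intro: exI[of _ \<zero>])

lemma elt_plus_ideal_zero:
  assumes "ideal J R"
  shows "elt_plus_ideal R \<zero> J = J"
  using assms ideal.Icarr unfolding elt_plus_ideal_def by force

end

context cring
begin

lemma elt_plus_ideal_eq_set_add:
  assumes "x \<in> carrier R"
  shows "elt_plus_ideal R x J = set_add R (PIdl x) J"
  using assms m_comm unfolding elt_plus_ideal_def cgenideal_def set_add_def' by fastforce

lemma elt_plus_ideal_ideal:
  assumes "x \<in> carrier R" "ideal J R"
  shows "ideal (elt_plus_ideal R x J) R"
  using add_ideals[OF cgenideal_ideal[OF assms(1)] assms(2)]
  by (simp add: elt_plus_ideal_eq_set_add[OF assms(1)])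

end

section \<open>The graph of a product ring\<close>

lemma mult_RDirProd: "(a, b) \<otimes>\<^bsub>RDirProd R S\<^esub> (c, d) = (a \<otimes>\<^bsub>R\<^esub> c, b \<otimes>\<^bsub>S\<^esub> d)"
  by (simp add: RDirProd_def DirProd_def monoid.defs)

lemma add_RDirProd: "(a, b) \<oplus>\<^bsub>RDirProd R S\<^esub> (c, d) = (a \<oplus>\<^bsub>R\<^esub> c, b \<oplus>\<^bsub>S\<^esub> d)"
  by (simp add: RDirProd_def DirProd_def monoid.defs)

lemma elt_plus_ideal_RDirProd:
  "elt_plus_ideal (RDirProd R S) (a, b) (I \<times> J) = elt_plus_ideal R a I \<times> elt_plus_ideal S b J"
  unfolding elt_plus_ideal_def RDirProd_carrier
  by (fastforce simp: mult_RDirProd add_RDirProd)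

lemma gverts_RDirProd:
  "(a, b) \<in> gverts (RDirProd R S) (I \<times> J) \<longleftrightarrow>
    a \<in> carrier R \<and> b \<in> carrier S \<and> (a \<notin> I \<or> b \<notin> J) \<and>
    elt_plus_ideal R a I \<times> elt_plus_ideal S b J \<noteq> carrier R \<times> carrier S"
  by (auto simp: gverts_def RDirProd_carrier elt_plus_ideal_RDirProd)

lemma gadj_RDirProd:
  "gadj (RDirProd R S) (I \<times> J) (a, b) (c, d) \<longleftrightarrow>
    (a, b) \<in> gverts (RDirProd R S) (I \<times> J) \<and> (c, d) \<in> gverts (RDirProd R S) (I \<times> J) \<and>
    (a, b) \<noteq> (c, d) \<and>
    (a \<notin> elt_plus_ideal R c I \<or> b \<notin> elt_plus_ideal S d J) \<and>
    (c \<notin> elt_plus_ideal R a I \<or> d \<notin> elt_plus_ideal S b J)"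
  by (auto simp: gadj_def elt_plus_ideal_RDirProd)

lemma swap_mem_gverts_RDirProd:
  "prod.swap v \<in> gverts (RDirProd S R) (J \<times> I) \<longleftrightarrow> v \<in> gverts (RDirProd R S) (I \<times> J)"
proof -
  have Times_swap: "A \<times> B = C \<times> D" if "B \<times> A = D \<times> C" for A C :: "'x set" and B D :: "'y set"
    using that by (metis product_swap)
  show ?thesis
    by (cases v) (auto simp: gverts_RDirProd dest: Times_swap)
qed

lemma has_K33_subgraph_RDirProd_swap:
  assumes "has_K33_subgraph (gverts (RDirProd R S) (I \<times> J)) (gadj (RDirProd R S) (I \<times> J))"
  shows "has_K33_subgraph (gverts (RDirProd S R) (J \<times> I)) (gadj (RDirProd S R) (J \<times> I))"
proof (rule has_K33_subgraph_inj_hom[OF assms, of prod.swap])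
  show "inj_on prod.swap (gverts (RDirProd R S) (I \<times> J))"
    by simp
  show "prod.swap ` gverts (RDirProd R S) (I \<times> J) \<subseteq> gverts (RDirProd S R) (J \<times> I)"
    using swap_mem_gverts_RDirProd by blast
  show "gadj (RDirProd S R) (J \<times> I) (prod.swap u) (prod.swap v)"
    if "gadj (RDirProd R S) (I \<times> J) u v" for u v
    using that swap_mem_gverts_RDirProd[where R = R and S = S and I = I and J = J]
    by (cases u; cases v) (auto simp: gadj_RDirProd)
qed

lemma has_K33_subgraph_RDirProd:
  assumes "ring R" "ring S" "ideal I R" "ideal J S" "J \<noteq> carrier S"
    and "card P = 3" "card Q = 3" "P \<subseteq> carrier R" "Q \<subseteq> carrier R"
    and P: "\<And>p. p \<in> P \<Longrightarrow> \<one>\<^bsub>R\<^esub> \<notin> elt_plus_ideal R p I"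
    and PQ: "\<And>p q. p \<in> P \<Longrightarrow> q \<in> Q \<Longrightarrow> q \<notin> elt_plus_ideal R p I"
  shows "has_K33_subgraph (gverts (RDirProd R S) (I \<times> J)) (gadj (RDirProd R S) (I \<times> J))"
proof -
  interpret R: ring R by fact
  interpret S: ring S by fact
  have "\<one>\<^bsub>S\<^esub> \<notin> J" "\<zero>\<^bsub>S\<^esub> \<in> J"
    using assms(4,5) ideal.one_imp_carrier additive_subgroup.zero_closed[OF ideal.axioms(1)]
    by blast+
  then have zero_plus_J: "elt_plus_ideal S \<zero>\<^bsub>S\<^esub> J = J" and "\<one>\<^bsub>S\<^esub> \<noteq> \<zero>\<^bsub>S\<^esub>"
    using S.elt_plus_ideal_zero[OF assms(4)] by auto
  obtain p0 where "p0 \<in> P"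
    using \<open>card P = 3\<close> by fastforce
  have vert_P: "(p, \<one>\<^bsub>S\<^esub>) \<in> gverts (RDirProd R S) (I \<times> J)" if "p \<in> P" for p
    using that P[OF that] assms(8) \<open>\<one>\<^bsub>S\<^esub> \<notin> J\<close>
    by (auto simp: gverts_RDirProd dest: equalityD2[THEN subsetD, of _ _ "(\<one>\<^bsub>R\<^esub>, \<one>\<^bsub>S\<^esub>)"])
  have "q \<notin> I" if "q \<in> Q" for q
    using PQ[OF \<open>p0 \<in> P\<close> that] R.ideal_subset_elt_plus_ideal[OF _ assms(3)] \<open>p0 \<in> P\<close> assms(8) by blast
  then have vert_Q: "(q, \<zero>\<^bsub>S\<^esub>) \<in> gverts (RDirProd R S) (I \<times> J)" if "q \<in> Q" for q
    using that assms(9) \<open>\<one>\<^bsub>S\<^esub> \<notin> J\<close>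
    by (auto simp: gverts_RDirProd zero_plus_J dest: equalityD2[THEN subsetD, of _ _ "(\<one>\<^bsub>R\<^esub>, \<one>\<^bsub>S\<^esub>)"])
  have "card ((\<lambda>p. (p, \<one>\<^bsub>S\<^esub>)) ` P) = 3" "card ((\<lambda>q. (q, \<zero>\<^bsub>S\<^esub>)) ` Q) = 3"
    using \<open>card P = 3\<close> \<open>card Q = 3\<close> by (simp_all add: card_image inj_on_def)
  moreover have "\<forall>u \<in> (\<lambda>p. (p, \<one>\<^bsub>S\<^esub>)) ` P. \<forall>v \<in> (\<lambda>q. (q, \<zero>\<^bsub>S\<^esub>)) ` Q.
      gadj (RDirProd R S) (I \<times> J) u v"
    using vert_P vert_Q PQ \<open>\<one>\<^bsub>S\<^esub> \<notin> J\<close> \<open>\<one>\<^bsub>S\<^esub> \<noteq> \<zero>\<^bsub>S\<^esub>\<close>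
    by (auto simp: gadj_RDirProd zero_plus_J)
  ultimately show ?thesis
    unfolding has_K33_subgraph_def using vert_P vert_Q \<open>\<one>\<^bsub>S\<^esub> \<noteq> \<zero>\<^bsub>S\<^esub>\<close>
    by (intro exI[of _ "(\<lambda>p. (p, \<one>\<^bsub>S\<^esub>)) ` P"] exI[of _ "(\<lambda>q. (q, \<zero>\<^bsub>S\<^esub>)) ` Q"]) blast
qed

lemma (in cring) local_one_add_notin_elt_plus_ideal:
  assumes "local_cring R" "ideal I R" "x \<in> gverts R I"
    and "p \<in> carrier R" "elt_plus_ideal R p I \<noteq> carrier R"
  shows "\<one> \<oplus> x \<notin> elt_plus_ideal R p I"
proof -
  obtain M where M: "maximalideal M R"
    and proper_subset_M: "\<And>K. ideal K R \<Longrightarrow> K \<noteq> carrier R \<Longrightarrow> K \<subseteq> M"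
    using local_cring_proper_ideal_subset[OF assms(1)] by blast
  interpret M: maximalideal M R
    by (rule M)
  have "x \<in> carrier R" "elt_plus_ideal R x I \<noteq> carrier R"
    using assms(3) unfolding gverts_def by auto
  then have "x \<in> M"
    using proper_subset_M[OF elt_plus_ideal_ideal[OF _ assms(2)]] elt_plus_ideal_self[OF _ assms(2)]
    by blast
  then have "\<one> \<oplus> x \<notin> M"
    using M.one_add_notin[OF M.I_notcarr[symmetric]] by blast
  then show ?thesis
    using proper_subset_M[OF elt_plus_ideal_ideal[OF assms(4,2)] assms(5)] by blast
qed

lemma (in cring) has_K33_subgraph_RDirProd_local:
  assumes "local_cring R" "ring S" "ideal I R" "I \<noteq> carrier R" "ideal J S" "J \<noteq> carrier S"
    and "x \<in> gverts R I" "y \<in> gverts R I" "x \<noteq> y"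
  shows "has_K33_subgraph (gverts (RDirProd R S) (I \<times> J)) (gadj (RDirProd R S) (I \<times> J))"
proof -
  have x: "x \<in> carrier R" "x \<notin> I" and y: "y \<in> carrier R" "y \<notin> I"
    using assms(7,8) unfolding gverts_def by auto
  define P where "P = {x, y, \<zero>}"
  define Q where "Q = {\<one>, \<one> \<oplus> x, \<one> \<oplus> y}"
  have P_proper: "p \<in> carrier R" "elt_plus_ideal R p I \<noteq> carrier R" if "p \<in> P" for p
    using that assms(4,7,8) elt_plus_ideal_zero[OF assms(3)] unfolding P_def gverts_def by auto
  have one_notin: "\<one> \<notin> elt_plus_ideal R p I" if "p \<in> P" for p
    using P_proper[OF that] elt_plus_ideal_ideal[OF _ assms(3)] ideal.one_imp_carrier by blast
  have "\<zero> \<in> I"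
    using assms(3) additive_subgroup.zero_closed[OF ideal.axioms(1)] by blast
  then have "x \<noteq> \<zero>" "y \<noteq> \<zero>"
    using x(2) y(2) by auto
  then have "card P = 3" "card Q = 3"
    using x(1) y(1) \<open>x \<noteq> y\<close> unfolding P_def Q_def by auto
  moreover have "P \<subseteq> carrier R" "Q \<subseteq> carrier R"
    using x y unfolding P_def Q_def by auto
  moreover have "q \<notin> elt_plus_ideal R p I" if "p \<in> P" "q \<in> Q" for p q
    using that one_notin local_one_add_notin_elt_plus_ideal[OF assms(1,3) _ P_proper[OF that(1)]]
      assms(7,8) unfolding Q_def by blast
  ultimately show ?thesis
    using has_K33_subgraph_RDirProd[OF ring_axioms assms(2,3,5,6)] one_notin by blast
qed

theorem theorem3p14:
  fixes R1 :: "('a, 'm) ring_scheme" and R2 :: "('b, 'n) ring_scheme"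
    and I1 :: "'a set" and I2 :: "'b set"
  assumes "local_cring R1" and "local_cring R2"
    and "ideal I1 R1" and "I1 \<noteq> carrier R1"
    and "ideal I2 R2" and "I2 \<noteq> carrier R2"
    and "(\<exists>x y. gadj R1 I1 x y) \<or> (\<exists>x y. gadj R2 I2 x y)"
  shows "\<not> planar (gverts (RDirProd R1 R2) (I1 \<times> I2)) (gadj (RDirProd R1 R2) (I1 \<times> I2))"
proof -
  have "cring R1" "cring R2"
    using assms(1,2) unfolding local_cring_def by auto
  then have "ring R1" "ring R2"
    by (auto intro: cring.axioms(1))
  have "has_K33_subgraph (gverts (RDirProd R1 R2) (I1 \<times> I2)) (gadj (RDirProd R1 R2) (I1 \<times> I2))"
    using assms(7)
  proof (elim disjE exE)
    fix x y assume "gadj R1 I1 x y"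
    then show ?thesis
      using cring.has_K33_subgraph_RDirProd_local[OF \<open>cring R1\<close> assms(1) \<open>ring R2\<close> assms(3-6)]
      unfolding gadj_def by blast
  next
    fix x y assume "gadj R2 I2 x y"
    then show ?thesis
      using cring.has_K33_subgraph_RDirProd_local[OF \<open>cring R2\<close> assms(2) \<open>ring R1\<close> assms(5,6,3,4)]
        has_K33_subgraph_RDirProd_swap
      unfolding gadj_def by blast
  qed
  then show ?thesis
    by (rule has_K33_subgraph_not_planar)
qed

end
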